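(* Let $\mathbb{G}$ be a homogeneous group of homogeneous dimension $Q\geq 3$ and $|\cdot|$ any homogeneous quasi-norm on $\mathbb{G}$. Then for every $f\in C_0^\infty(\mathbb{G}\setminus\{0\})$, $$\|f\|^2_{L^2(\mathbb{G})}\leq\frac{2}{Q-2}\,\|\mathcal{R}f\|_{L^2(\mathbb{G})}\,\big\||x|f\big\|_{L^2(\mathbb{G})}.$$
   Context: A homogeneous group $\mathbb{G}$ is a Lie group whose underlying manifold is $\mathbb{R}^n$, equipped with dilations $D_\lambda(x)=(\lambda^{\nu_1}x_1,\dots,\lambda^{\nu_n}x_n)$, $\nu_1,\dots,\nu_n>0$, such that each $D_\lambda$ ($\lambda>0$) is a group automorphism. Its homogeneous dimension is $Q=\nu_1+\dots+\nu_n$. The Haar measure $dx$ on $\mathbb{G}$ is Lebesgue measure on $\mathbb{R}^n$, and $L^2(\mathbb{G})$ is taken with respect to it. A homogeneous quasi-norm is a continuous function $x\mapsto|x|\in[0,\infty)$ with $|x^{-1}|=|x|$, $|D_\lambda x|=\lambda|x|$ for all $\lambda>0$, and $|x|=0$ iff $x=0$. The radial derivative $\mathcal{R}$ is defined for $x\neq 0$ by $\mathcal{R}f(x)=\frac{d}{dr}\big[f(D_r y)\big]\big|_{r=|x|}$, where $y=D_{1/|x|}x$; i.e. $\mathcal{R}=\frac{d}{d|x|}$ is differentiation along the dilation orbits with respect to $r=|x|$. *)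

theory Defs
  imports "HOL-Analysis.Analysis"
begin

fun C_k :: "nat \<Rightarrow> ('a::euclidean_space \<Rightarrow> 'b::real_normed_vector) \<Rightarrow> bool" where
  "C_k 0 f = continuous_on UNIV f"
| "C_k (Suc k) f = (continuous_on UNIV f \<and> (\<forall>x. f differentiable (at x)) \<and>
      (\<forall>v. C_k k (\<lambda>x. frechet_derivative f (at x) v)))"

definition smooth_fun :: "('a::euclidean_space \<Rightarrow> 'b::real_normed_vector) \<Rightarrow> bool" where
  "smooth_fun f \<longleftrightarrow> (\<forall>k. C_k k f)"

definition dil :: "('n::finite \<Rightarrow> real) \<Rightarrow> real \<Rightarrow> real^'n \<Rightarrow> real^'n" where
  "dil \<nu> l x = (\<chi> i. (l powr \<nu> i) * (x $ i))"

definition homogeneous_group ::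
  "('n::finite \<Rightarrow> real) \<Rightarrow> (real^'n \<Rightarrow> real^'n \<Rightarrow> real^'n) \<Rightarrow> (real^'n \<Rightarrow> real^'n) \<Rightarrow> bool" where
  "homogeneous_group \<nu> gmul ginv \<longleftrightarrow>
     (\<forall>i. \<nu> i > 0) \<and>
     (\<forall>x y z. gmul (gmul x y) z = gmul x (gmul y z)) \<and>
     (\<exists>e. \<forall>x. gmul e x = x \<and> gmul x e = x \<and> gmul (ginv x) x = e \<and> gmul x (ginv x) = e) \<and>
     smooth_fun (\<lambda>p::(real^'n) \<times> (real^'n). gmul (fst p) (snd p)) \<and>
     smooth_fun ginv \<and>
     (\<forall>l>0. \<forall>x y. dil \<nu> l (gmul x y) = gmul (dil \<nu> l x) (dil \<nu> l y))"

definition hom_dim :: "('n::finite \<Rightarrow> real) \<Rightarrow> real" where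
  "hom_dim \<nu> = (\<Sum>i\<in>UNIV. \<nu> i)"

definition hom_quasi_norm ::
  "('n::finite \<Rightarrow> real) \<Rightarrow> (real^'n \<Rightarrow> real^'n) \<Rightarrow> (real^'n \<Rightarrow> real) \<Rightarrow> bool" where
  "hom_quasi_norm \<nu> ginv q \<longleftrightarrow>
     continuous_on UNIV q \<and> (\<forall>x. q x \<ge> 0) \<and> (\<forall>x. q (ginv x) = q x) \<and>
     (\<forall>l>0. \<forall>x. q (dil \<nu> l x) = l * q x) \<and> (\<forall>x. q x = 0 \<longleftrightarrow> x = 0)"

definition radial_deriv ::
  "('n::finite \<Rightarrow> real) \<Rightarrow> (real^'n \<Rightarrow> real) \<Rightarrow> (real^'n \<Rightarrow> complex) \<Rightarrow> real^'n \<Rightarrow> complex" where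
  "radial_deriv \<nu> q f x =
     (if x = 0 then 0
      else vector_derivative (\<lambda>r. f (dil \<nu> r (dil \<nu> (1 / q x) x))) (at (q x)))"

text \<open>L^2 norm with respect to Lebesgue (= Haar) measure.\<close>
definition L2norm :: "('a::euclidean_space \<Rightarrow> 'b::real_normed_vector) \<Rightarrow> real" where
  "L2norm g = sqrt (LINT x|lborel. (norm (g x))\<^sup>2)"

end

theory Submission
  imports Defs
begin

(*
  Since the dilation D_r has Jacobian r^Q, the integral of |f(D_r x)|^2 equals r^(-Q) times that
  of |f|^2; differentiating at r = 1 under the integral sign gives the Euler identity
  Q ||f||^2 = -2 Re <f, Ef>, where E = \<Sum> \<nu>_i x_i \<partial>_i generates the dilations. Along the dilation
  orbits E = |x| R, so Cauchy-Schwarz gives Q ||f||^2 \<le> 2 ||Rf|| |||x| f||, which is stronger than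
  the claim because 2/Q < 2/(Q-2).
*)

lemma sum_axis_eq_vec: "(\<Sum>i\<in>UNIV. c i *\<^sub>R (axis i 1 :: real^'n::finite)) = (\<chi> i. c i)"
  by (simp add: vec_eq_iff axis_def if_distrib sum.If_cases cong del: if_weak_cong)

lemma continuous_on_apply_bounded_linear:
  fixes D :: "real^'n::finite \<Rightarrow> real^'n \<Rightarrow> 'b::real_normed_vector"
  assumes "\<And>x. bounded_linear (D x)" and "\<And>v. continuous_on UNIV (\<lambda>x. D x v)"
    and "continuous_on S g" and "continuous_on S e"
  shows "continuous_on S (\<lambda>s. D (g s) (e s))"
proof -
  have "D (g s) (e s) = (\<Sum>i\<in>UNIV. (e s $ i) *\<^sub>R D (g s) (axis i 1))" for s
  proof -
    interpret bounded_linear "D (g s)" by (rule assms(1))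
    have "D (g s) (e s) = D (g s) (\<Sum>i\<in>UNIV. (e s $ i) *\<^sub>R axis i 1)"
      by (simp add: sum_axis_eq_vec)
    then show ?thesis by (simp add: sum scaleR)
  qed
  moreover have "continuous_on S (\<lambda>s. D (g s) (axis i 1))" for i
    by (rule continuous_on_compose2[OF assms(2) assms(3)]) auto
  ultimately show ?thesis
    by (simp only:) (intro continuous_intros continuous_on_component assms(4))
qed

lemma has_derivative_eq_0_if_vanishes_on_open:
  assumes "(f has_derivative D) (at x)" and "open U" "x \<in> U" and "\<And>y. y \<in> U \<Longrightarrow> f y = 0"
  shows "D = (\<lambda>_. 0)"
proof -
  have "((\<lambda>_. 0) has_derivative (\<lambda>_. 0)) (at x)"
    by simp
  then have "(f has_derivative (\<lambda>_. 0)) (at x)"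
    using assms(2,3) by (rule has_derivative_transform_within_open) (simp add: assms(4))
  with assms(1) show ?thesis
    by (rule has_derivative_unique)
qed

lemma smooth_fun_imp_C1:
  assumes "smooth_fun f"
  shows "(f has_derivative frechet_derivative f (at x)) (at x)"
    and "continuous_on UNIV (\<lambda>x. frechet_derivative f (at x) v)"
proof -
  have "C_k (Suc 0) f"
    using assms by (simp add: smooth_fun_def)
  then show "(f has_derivative frechet_derivative f (at x)) (at x)"
    and "continuous_on UNIV (\<lambda>x. frechet_derivative f (at x) v)"
    by (simp_all add: frechet_derivative_works)
qed

section \<open>Integrals of compactly supported functions\<close>

lemma integrable_continuous_compact_support:
  fixes g :: "'a::euclidean_space \<Rightarrow> 'b::{banach, second_countable_topology}"
  assumes "continuous_on UNIV g" "compact K" "\<And>x. x \<notin> K \<Longrightarrow> g x = 0"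
  shows "integrable lborel g"
proof -
  have "integrable lborel (\<lambda>x. indicator K x *\<^sub>R g x)"
    by (rule borel_integrable_compact[OF assms(2) continuous_on_subset[OF assms(1)]]) simp
  also have "(\<lambda>x. indicator K x *\<^sub>R g x) = g"
    using assms(3) by (auto simp: indicator_def)
  finally show ?thesis .
qed

lemma has_integral_continuous_compact_support:
  fixes g :: "'a::euclidean_space \<Rightarrow> 'b::euclidean_space"
  assumes "continuous_on UNIV g" "compact K" "\<And>x. x \<notin> K \<Longrightarrow> g x = 0"
  shows "(g has_integral (LINT x|lborel. g x)) UNIV"
  by (rule has_integral_integral_lborel, rule integrable_continuous_compact_support[OF assms(1,2)])
     (rule assms(3))

lemma has_integral_restrict_support:
  fixes g :: "'a::euclidean_space \<Rightarrow> 'b::banach"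
  assumes "(g has_integral I) UNIV" "\<And>x. x \<notin> T \<Longrightarrow> g x = 0"
  shows "(g has_integral I) T"
proof -
  have "(\<lambda>x. if x \<in> T then g x else 0) = g"
    using assms(2) by auto
  then show ?thesis
    using assms(1) has_integral_restrict_UNIV[of T g I] by simp
qed

lemma integral_UNIV_eq_integral_support:
  fixes g :: "'a::euclidean_space \<Rightarrow> 'b::banach"
  assumes "\<And>x. x \<notin> T \<Longrightarrow> g x = 0"
  shows "integral UNIV g = integral T g"
proof -
  have "(\<lambda>x. if x \<in> T then g x else 0) = g"
    using assms by auto
  then show ?thesis
    using integral_restrict_UNIV[of T g] by simp
qed

lemma mult_le_scaled_sum_squares:
  fixes a b t :: real
  assumes "t > 0"
  shows "a * b \<le> (t * a\<^sup>2 + b\<^sup>2 / t) / 2"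
proof -
  have "0 \<le> (t * a - b)\<^sup>2 / t"
    using assms by simp
  also have "\<dots> = t * a\<^sup>2 + b\<^sup>2 / t - 2 * a * b"
    using assms by (simp add: power2_eq_square field_simps)
  finally show ?thesis by simp
qed

lemma le_two_sqrt_mult_if_le_scaled_sum:
  fixes a b c :: real
  assumes le: "\<And>t. t > 0 \<Longrightarrow> a \<le> t * c + b / t" and "b \<ge> 0" "c \<ge> 0"
  shows "a \<le> 2 * sqrt b * sqrt c"
proof (cases "b > 0 \<and> c > 0")
  case True
  then have "sqrt b / sqrt c * c = sqrt b * sqrt c" "b / (sqrt b / sqrt c) = sqrt b * sqrt c"
    by (simp_all add: field_simps)
  then show ?thesis
    using le[of "sqrt b / sqrt c"] True by simp
next
  case False
  have "a \<le> 0"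
  proof (rule ccontr)
    assume "\<not> a \<le> 0"
    then have "a > 0" by simp
    show False
    proof (cases "c = 0")
      case True
      have "b / ((b + 1) / a) < a"
        using \<open>a > 0\<close> \<open>b \<ge> 0\<close> by (simp add: field_simps)
      with le[of "(b + 1) / a"] True \<open>a > 0\<close> \<open>b \<ge> 0\<close> show False by simp
    next
      case False
      with \<open>\<not> (b > 0 \<and> c > 0)\<close> \<open>b \<ge> 0\<close> \<open>c \<ge> 0\<close> have "b = 0" by auto
      have "a / (c + 1) * c < a"
        using \<open>a > 0\<close> \<open>c \<ge> 0\<close> by (simp add: field_simps)
      with le[of "a / (c + 1)"] \<open>b = 0\<close> \<open>a > 0\<close> \<open>c \<ge> 0\<close> show False by simp
    qed
  qed
  moreover have "0 \<le> 2 * sqrt b * sqrt c"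
    using assms(2,3) by simp
  ultimately show ?thesis by linarith
qed

lemma abs_integral_inner_le_L2norm:
  fixes u v :: "'a::euclidean_space \<Rightarrow> 'b::real_inner"
  assumes "integrable lborel (\<lambda>x. (norm (u x))\<^sup>2)" "integrable lborel (\<lambda>x. (norm (v x))\<^sup>2)"
    and "integrable lborel (\<lambda>x. u x \<bullet> v x)"
  shows "\<bar>LINT x|lborel. u x \<bullet> v x\<bar> \<le> L2norm u * L2norm v"
proof -
  define U where "U = (LINT x|lborel. (norm (u x))\<^sup>2)"
  define V where "V = (LINT x|lborel. (norm (v x))\<^sup>2)"
  have "2 * \<bar>LINT x|lborel. u x \<bullet> v x\<bar> \<le> t * U + V / t" if "t > 0" for t
  proof -
    have "\<bar>LINT x|lborel. u x \<bullet> v x\<bar>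
        \<le> (LINT x|lborel. (t * (norm (u x))\<^sup>2 + (norm (v x))\<^sup>2 / t) / 2)"
    proof (rule integral_abs_bound_integral)
      fix x
      have "\<bar>u x \<bullet> v x\<bar> \<le> norm (u x) * norm (v x)"
        by (rule Cauchy_Schwarz_ineq2)
      also have "\<dots> \<le> (t * (norm (u x))\<^sup>2 + (norm (v x))\<^sup>2 / t) / 2"
        using \<open>t > 0\<close> by (rule mult_le_scaled_sum_squares)
      finally show "\<bar>u x \<bullet> v x\<bar> \<le> (t * (norm (u x))\<^sup>2 + (norm (v x))\<^sup>2 / t) / 2" .
    qed (use assms in auto)
    also have "\<dots> = (t * U + V / t) / 2"
      using assms(1,2) by (simp add: U_def V_def)
    finally show ?thesis by simp
  qed
  then have "2 * \<bar>LINT x|lborel. u x \<bullet> v x\<bar> \<le> 2 * sqrt V * sqrt U"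
    by (rule le_two_sqrt_mult_if_le_scaled_sum) (simp_all add: U_def V_def)
  then show ?thesis
    by (simp add: L2norm_def U_def V_def mult.commute)
qed

section \<open>Dilations\<close>

(* The generator of the dilations: the derivative of r \<mapsto> D_r x at r = 1. *)
definition euler_field :: "('n::finite \<Rightarrow> real) \<Rightarrow> real^'n \<Rightarrow> real^'n" where
  "euler_field \<nu> x = (\<chi> i. \<nu> i * x $ i)"

lemma continuous_on_euler_field: "continuous_on S (euler_field \<nu>)"
  unfolding euler_field_def by (intro continuous_intros)

lemma dil_1 [simp]: "dil \<nu> 1 x = x"
  by (simp add: dil_def vec_eq_iff)

lemma dil_mult: "dil \<nu> r (dil \<nu> s x) = dil \<nu> (r * s) x"
  by (simp add: dil_def vec_eq_iff powr_mult)

lemma continuous_on_dil: "continuous_on ({0<..} \<times> UNIV) (\<lambda>(r, x). dil \<nu> r x)"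
  unfolding dil_def split_beta
  by (intro continuous_intros continuous_on_powr) auto

lemma bounded_dil_preimage:
  assumes "compact R" "R \<subseteq> {0<..}" "compact K"
  shows "bounded {x. \<exists>r\<in>R. dil \<nu> r x \<in> K}"
proof -
  have "continuous_on (R \<times> K) ((\<lambda>(r, x). dil \<nu> r x) \<circ> (\<lambda>(r, y). (1 / r, y)))"
    using assms(2)
    by (intro continuous_on_compose continuous_on_subset[OF continuous_on_dil])
       (auto intro!: continuous_intros simp: split_beta)
  then have "continuous_on (R \<times> K) (\<lambda>(r, y). dil \<nu> (1 / r) y)"
    by (simp add: o_def split_beta)
  then have "compact ((\<lambda>(r, y). dil \<nu> (1 / r) y) ` (R \<times> K))"
    using assms(1,3) by (intro compact_continuous_image compact_Times)
  moreover have "{x. \<exists>r\<in>R. dil \<nu> r x \<in> K} \<subseteq> (\<lambda>(r, y). dil \<nu> (1 / r) y) ` (R \<times> K)"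
  proof
    fix x assume "x \<in> {x. \<exists>r\<in>R. dil \<nu> r x \<in> K}"
    then obtain r where "r \<in> R" "dil \<nu> r x \<in> K" by blast
    moreover have "x = dil \<nu> (1 / r) (dil \<nu> r x)"
      using \<open>r \<in> R\<close> assms(2) by (auto simp: dil_mult)
    ultimately show "x \<in> (\<lambda>(r, y). dil \<nu> (1 / r) y) ` (R \<times> K)" by force
  qed
  ultimately show ?thesis
    using bounded_subset compact_imp_bounded by blast
qed

lemma has_vector_derivative_dil:
  assumes "r > 0"
  shows "((\<lambda>r. dil \<nu> r x) has_vector_derivative (1 / r) *\<^sub>R euler_field \<nu> (dil \<nu> r x)) (at r within U)"
proof -
  have dil_sum: "(\<lambda>r. dil \<nu> r x) = (\<lambda>r. \<Sum>i\<in>UNIV. (r powr \<nu> i * x $ i) *\<^sub>R axis i 1)"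
    by (simp add: sum_axis_eq_vec dil_def)
  have deriv_sum: "(1 / r) *\<^sub>R euler_field \<nu> (dil \<nu> r x)
      = (\<Sum>i\<in>UNIV. (\<nu> i * r powr (\<nu> i - 1) * x $ i) *\<^sub>R axis i 1)"
    using assms by (simp add: sum_axis_eq_vec euler_field_def dil_def vec_eq_iff powr_diff)
  show ?thesis
    unfolding dil_sum deriv_sum
    apply (rule has_vector_derivative_at_within)
    apply (rule has_vector_derivative_sum)
    apply (rule has_vector_derivative_eq_rhs)
     apply (rule has_vector_derivative_scaleR[where g="\<lambda>_. axis _ 1"])
      apply (rule derivative_eq_intros | use assms in simp)+
    done
qed

lemma has_vector_derivative_comp_dil:
  assumes "(f has_derivative D) (at (dil \<nu> r y))" and "r > 0"
  shows "((\<lambda>r. f (dil \<nu> r y)) has_vector_derivative D ((1 / r) *\<^sub>R euler_field \<nu> (dil \<nu> r y)))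
           (at r within U)"
proof -
  interpret D: bounded_linear D
    using assms(1) by (rule has_derivative_bounded_linear)
  show ?thesis
    using vector_derivative_diff_chain_within[OF has_vector_derivative_dil[OF assms(2)]
        has_derivative_at_withinI[OF assms(1)]]
    by (simp add: D.scaleR o_def)
qed

lemma has_real_derivative_norm_sq_comp_dil:
  fixes f :: "real^'n::finite \<Rightarrow> 'b::real_inner"
  assumes "(f has_derivative D) (at (dil \<nu> r y))" and "r > 0"
  shows "((\<lambda>r. (norm (f (dil \<nu> r y)))\<^sup>2) has_real_derivative
           2 * (f (dil \<nu> r y) \<bullet> D ((1 / r) *\<^sub>R euler_field \<nu> (dil \<nu> r y)))) (at r within U)"
  using bounded_bilinear.has_vector_derivative[OF bounded_bilinear_inner
      has_vector_derivative_comp_dil[OF assms] has_vector_derivative_comp_dil[OF assms]]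
  by (simp add: has_real_derivative_iff_has_vector_derivative power2_norm_eq_inner inner_commute)

lemma has_integral_comp_dil:
  fixes h :: "real^'n::finite \<Rightarrow> 'b::banach"
  assumes "(h has_integral A) UNIV" "bounded {x. h x \<noteq> 0}" "r > 0"
  shows "((\<lambda>x. h (dil \<nu> r x)) has_integral A /\<^sub>R r powr (\<Sum>i\<in>UNIV. \<nu> i)) UNIV"
proof -
  obtain c where box: "{x. h x \<noteq> 0} \<subseteq> cbox (-c) c"
    using assms(2) by (rule bounded_subset_cbox_symmetric)
  have "(h has_integral A) (cbox (-c) c)"
    using box by (intro has_integral_restrict_support[OF assms(1)]) blast
  then have "((\<lambda>x. h (dil \<nu> r x)) has_integral A /\<^sub>R \<bar>\<Prod>i\<in>UNIV. r powr \<nu> i\<bar>)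
      ((\<lambda>x. \<chi> i. x $ i / r powr \<nu> i) ` cbox (-c) c)"
  proof -
    have "\<And>i. r powr \<nu> i \<noteq> 0" using assms(3) by simp
    from has_integral_stretch_cart[OF \<open>(h has_integral A) (cbox (-c) c)\<close> this]
    show ?thesis unfolding dil_def .
  qed
  then have "((\<lambda>x. h (dil \<nu> r x)) has_integral A /\<^sub>R \<bar>\<Prod>i\<in>UNIV. r powr \<nu> i\<bar>) UNIV"
  proof (rule has_integral_on_superset)
    fix x assume x: "x \<notin> (\<lambda>x. \<chi> i. x $ i / r powr \<nu> i) ` cbox (-c) c"
    have x_eq: "x = (\<lambda>x. \<chi> i. x $ i / r powr \<nu> i) (dil \<nu> r x)"
      using assms(3) by (simp add: dil_def vec_eq_iff)
    have "dil \<nu> r x \<notin> cbox (-c) c"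
    proof
      assume "dil \<nu> r x \<in> cbox (-c) c"
      with x_eq have "x \<in> (\<lambda>x. \<chi> i. x $ i / r powr \<nu> i) ` cbox (-c) c"
        by (rule image_eqI)
      with x show False ..
    qed
    with box show "h (dil \<nu> r x) = 0"
      by blast
  qed simp
  moreover have "\<bar>\<Prod>i\<in>UNIV. r powr \<nu> i\<bar> = r powr (\<Sum>i\<in>UNIV. \<nu> i)"
    using assms(3) by (simp add: powr_sum abs_prod)
  ultimately show ?thesis by simp
qed

section \<open>The Euler identity\<close>

lemma continuous_on_inner_derivative_comp_dil:
  fixes f :: "real^'n::finite \<Rightarrow> 'b::real_inner"
  assumes fD: "\<And>x. (f has_derivative D x) (at x)"
    and Dc: "\<And>v. continuous_on UNIV (\<lambda>x. D x v)"
  shows "continuous_on ({0<..} \<times> UNIV)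
           (\<lambda>(r, x). f (dil \<nu> r x) \<bullet> D (dil \<nu> r x) ((1 / r) *\<^sub>R euler_field \<nu> (dil \<nu> r x)))"
proof -
  let ?S = "{0::real<..} \<times> (UNIV :: (real^'n) set)"
  have fc: "continuous_on UNIV f"
    using fD by (rule has_derivative_continuous_on)
  have Dl: "bounded_linear (D x)" for x
    using fD by (rule has_derivative_bounded_linear)
  have dilc: "continuous_on ?S (\<lambda>p. dil \<nu> (fst p) (snd p))"
    using continuous_on_dil by (simp add: split_beta)
  have "continuous_on ?S (\<lambda>p. 1 / fst p)"
    by (intro continuous_intros) auto
  moreover have "continuous_on ?S (\<lambda>p. euler_field \<nu> (dil \<nu> (fst p) (snd p)))"
    by (rule continuous_on_compose2[OF continuous_on_euler_field[of UNIV] dilc]) simp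
  ultimately have "continuous_on ?S (\<lambda>p. (1 / fst p) *\<^sub>R euler_field \<nu> (dil \<nu> (fst p) (snd p)))"
    by (rule continuous_on_scaleR)
  then have "continuous_on ?S
      (\<lambda>p. D (dil \<nu> (fst p) (snd p)) ((1 / fst p) *\<^sub>R euler_field \<nu> (dil \<nu> (fst p) (snd p))))"
    by (rule continuous_on_apply_bounded_linear[OF Dl Dc dilc])
  moreover have "continuous_on ?S (\<lambda>p. f (dil \<nu> (fst p) (snd p)))"
    by (rule continuous_on_compose2[OF fc dilc]) simp
  ultimately show ?thesis
    unfolding split_beta by (intro continuous_intros)
qed

lemma has_real_derivative_integral_cbox_norm_sq_comp_dil:
  fixes f :: "real^'n::finite \<Rightarrow> 'b::real_inner"
  assumes fD: "\<And>x. (f has_derivative D x) (at x)"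
    and Dc: "\<And>v. continuous_on UNIV (\<lambda>x. D x v)"
  shows "((\<lambda>r. integral (cbox a b) (\<lambda>x. (norm (f (dil \<nu> r x)))\<^sup>2)) has_real_derivative
           integral (cbox a b) (\<lambda>x. 2 * (f x \<bullet> D x (euler_field \<nu> x)))) (at 1)"
proof -
  define R :: "real set" where "R = {1/2..2}"
  define F where "F r x = 2 * (f (dil \<nu> r x) \<bullet> D (dil \<nu> r x) ((1 / r) *\<^sub>R euler_field \<nu> (dil \<nu> r x)))"
    for r x
  have "((\<lambda>r. integral (cbox a b) (\<lambda>x. (norm (f (dil \<nu> r x)))\<^sup>2)) has_real_derivative
      integral (cbox a b) (F 1)) (at 1 within R)"
  proof (rule leibniz_rule_field_derivative)
    fix r x assume "r \<in> R"
    then show "((\<lambda>r. (norm (f (dil \<nu> r x)))\<^sup>2) has_real_derivative F r x) (at r within R)"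
      unfolding F_def R_def by (intro has_real_derivative_norm_sq_comp_dil fD) auto
  next
    fix r :: real
    have "continuous_on (cbox a b) (dil \<nu> r)"
      unfolding dil_def by (intro continuous_intros)
    then have "continuous_on (cbox a b) (\<lambda>x. f (dil \<nu> r x))"
      by (rule continuous_on_compose2[OF has_derivative_continuous_on[OF fD]]) simp
    then show "(\<lambda>x. (norm (f (dil \<nu> r x)))\<^sup>2) integrable_on cbox a b"
      by (intro integrable_continuous continuous_intros)
  next
    have "continuous_on (R \<times> cbox a b) (\<lambda>p. f (dil \<nu> (fst p) (snd p)) \<bullet>
        D (dil \<nu> (fst p) (snd p)) ((1 / fst p) *\<^sub>R euler_field \<nu> (dil \<nu> (fst p) (snd p))))"
      by (rule continuous_on_subset[OF continuous_on_inner_derivative_comp_dil[OF fD Dc,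
            unfolded split_beta]]) (auto simp: R_def)
    then show "continuous_on (R \<times> cbox a b) (\<lambda>(r, x). F r x)"
      unfolding F_def split_beta by (rule continuous_on_mult_left)
  qed (auto simp: R_def)
  moreover have "at (1::real) within R = at 1"
    by (rule at_within_interior) (simp add: R_def)
  moreover have "F 1 = (\<lambda>x. 2 * (f x \<bullet> D x (euler_field \<nu> x)))"
    by (simp add: F_def fun_eq_iff)
  ultimately show ?thesis by simp
qed

lemma has_real_derivative_integral_norm_sq_comp_dil:
  fixes f :: "real^'n::finite \<Rightarrow> 'b::real_inner"
  assumes fD: "\<And>x. (f has_derivative D x) (at x)"
    and Dc: "\<And>v. continuous_on UNIV (\<lambda>x. D x v)"
    and K: "compact K" and supp: "\<And>x. x \<notin> K \<Longrightarrow> f x = 0"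
  shows "((\<lambda>r. integral UNIV (\<lambda>x. (norm (f (dil \<nu> r x)))\<^sup>2)) has_real_derivative
           integral UNIV (\<lambda>x. 2 * (f x \<bullet> D x (euler_field \<nu> x)))) (at 1)"
proof -
  \<comment> \<open>For r near 1 all the functions f \<circ> D_r vanish outside one box.\<close>
  have "bounded {x. \<exists>r\<in>{1/2..2}. dil \<nu> r x \<in> K}"
    using K by (intro bounded_dil_preimage) auto
  then obtain c where box: "{x. \<exists>r\<in>{1/2..2}. dil \<nu> r x \<in> K} \<subseteq> cbox (-c) c"
    by (rule bounded_subset_cbox_symmetric)
  have outside_box: "f (dil \<nu> r x) = 0" if "r \<in> {1/2..2}" "x \<notin> cbox (-c) c" for r x
    using box that supp by blast
  have "integral UNIV (\<lambda>x. 2 * (f x \<bullet> D x (euler_field \<nu> x)))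
      = integral (cbox (-c) c) (\<lambda>x. 2 * (f x \<bullet> D x (euler_field \<nu> x)))"
    using outside_box[of 1] by (intro integral_UNIV_eq_integral_support) simp
  moreover have "integral (cbox (-c) c) (\<lambda>x. (norm (f (dil \<nu> r x)))\<^sup>2)
      = integral UNIV (\<lambda>x. (norm (f (dil \<nu> r x)))\<^sup>2)" if "r \<in> {1/2<..<2}" for r
    using outside_box[of r] that by (intro integral_UNIV_eq_integral_support[symmetric]) simp
  ultimately show ?thesis
    using has_field_derivative_transform_within_open[OF
        has_real_derivative_integral_cbox_norm_sq_comp_dil[OF fD Dc], of "{1/2<..<2}"]
    by simp
qed

lemma euler_identity_integral_norm_sq:
  fixes f :: "real^'n::finite \<Rightarrow> 'b::real_inner"
  assumes fD: "\<And>x. (f has_derivative D x) (at x)"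
    and Dc: "\<And>v. continuous_on UNIV (\<lambda>x. D x v)"
    and K: "compact K" and supp: "\<And>x. x \<notin> K \<Longrightarrow> f x = 0"
  shows "(\<Sum>i\<in>UNIV. \<nu> i) * (LINT x|lborel. (norm (f x))\<^sup>2)
           = - 2 * (LINT x|lborel. f x \<bullet> D x (euler_field \<nu> x))"
proof -
  define Q where "Q = (\<Sum>i\<in>UNIV. \<nu> i)"
  define A where "A = (LINT x|lborel. (norm (f x))\<^sup>2)"
  define P where "P = (LINT x|lborel. f x \<bullet> D x (euler_field \<nu> x))"
  have fc: "continuous_on UNIV f"
    using fD by (rule has_derivative_continuous_on)
  have "continuous_on UNIV (\<lambda>x. D x (euler_field \<nu> x))"
    using has_derivative_bounded_linear[OF fD] Dc continuous_on_id continuous_on_euler_field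
    by (rule continuous_on_apply_bounded_linear)
  then have "((\<lambda>x. f x \<bullet> D x (euler_field \<nu> x)) has_integral P) UNIV"
    unfolding P_def using K supp
    by (intro has_integral_continuous_compact_support continuous_intros fc) auto
  then have "integral UNIV (\<lambda>x. 2 * (f x \<bullet> D x (euler_field \<nu> x))) = 2 * P"
    by (simp add: integral_unique has_integral_mult_right)
  moreover have A: "((\<lambda>x. (norm (f x))\<^sup>2) has_integral A) UNIV"
    unfolding A_def using K supp
    by (intro has_integral_continuous_compact_support continuous_intros fc) auto
  have "integral UNIV (\<lambda>x. (norm (f (dil \<nu> r x)))\<^sup>2) = A * r powr - Q" if "r > 0" for r
  proof -
    have "bounded {x. (norm (f x))\<^sup>2 \<noteq> 0}"
      using supp by (intro bounded_subset[OF compact_imp_bounded[OF K]]) auto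
    with that have "((\<lambda>x. (norm (f (dil \<nu> r x)))\<^sup>2) has_integral A /\<^sub>R r powr Q) UNIV"
      unfolding Q_def by (intro has_integral_comp_dil[OF A])
    then show ?thesis
      by (simp add: integral_unique powr_minus divide_inverse mult.commute)
  qed
  then have "((\<lambda>r. A * r powr - Q) has_real_derivative
      integral UNIV (\<lambda>x. 2 * (f x \<bullet> D x (euler_field \<nu> x)))) (at 1)"
    using has_field_derivative_transform_within_open[OF
        has_real_derivative_integral_norm_sq_comp_dil[OF fD Dc K supp], of "{0<..}"]
    by simp
  moreover have "((\<lambda>r. A * r powr - Q) has_real_derivative - Q * A) (at 1)"
    by (rule derivative_eq_intros refl | simp)+
  ultimately show ?thesis
    unfolding Q_def[symmetric] A_def[symmetric] P_def[symmetric] using DERIV_unique by fastforce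
qed

section \<open>The radial derivative\<close>

lemma radial_deriv_eq:
  fixes f :: "real^'n::finite \<Rightarrow> complex"
  assumes "x \<noteq> 0" "q x > 0" and "(f has_derivative D) (at x)"
  shows "radial_deriv \<nu> q f x = D (euler_field \<nu> x) / of_real (q x)"
proof -
  define y where "y = dil \<nu> (1 / q x) x"
  have x_eq: "dil \<nu> (q x) y = x"
    using assms(2) by (simp add: y_def dil_mult)
  have "((\<lambda>r. f (dil \<nu> r y)) has_vector_derivative D ((1 / q x) *\<^sub>R euler_field \<nu> x)) (at (q x))"
    using has_vector_derivative_comp_dil[of f D \<nu> "q x" y UNIV] assms(2,3) by (simp add: x_eq)
  then have "radial_deriv \<nu> q f x = D ((1 / q x) *\<^sub>R euler_field \<nu> x)"
    using assms(1) by (simp add: radial_deriv_def y_def vector_derivative_at)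
  also have "\<dots> = D (euler_field \<nu> x) / of_real (q x)"
    using linear_scale[OF has_derivative_linear[OF assms(3)]]
    by (simp add: scaleR_conv_of_real divide_inverse mult.commute)
  finally show ?thesis .
qed

lemma quasi_norm_mult_radial_deriv:
  fixes f :: "real^'n::finite \<Rightarrow> complex"
  assumes "\<And>x. x \<noteq> 0 \<Longrightarrow> q x > 0" and "(f has_derivative D) (at x)"
  shows "of_real (q x) * radial_deriv \<nu> q f x = D (euler_field \<nu> x)"
proof (cases "x = 0")
  case True
  have "euler_field \<nu> 0 = 0"
    by (simp add: euler_field_def vec_eq_iff)
  with True show ?thesis
    using linear_0[OF has_derivative_linear[OF assms(2)]] by (simp add: radial_deriv_def)
next
  case False
  then have "q x > 0"
    by (rule assms(1))
  have "radial_deriv \<nu> q f x = D (euler_field \<nu> x) / of_real (q x)"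
    using False \<open>q x > 0\<close> assms(2) by (rule radial_deriv_eq)
  with \<open>q x > 0\<close> show ?thesis
    by simp
qed

lemma radial_deriv_eq_0_if_vanishes_on_open:
  fixes f :: "real^'n::finite \<Rightarrow> complex"
  assumes "\<And>x. x \<noteq> 0 \<Longrightarrow> q x > 0" and "\<And>x. (f has_derivative D x) (at x)"
    and "open U" "x \<in> U" "\<And>y. y \<in> U \<Longrightarrow> f y = 0"
  shows "radial_deriv \<nu> q f x = 0"
proof (cases "x = 0")
  case False
  have "radial_deriv \<nu> q f x = D x (euler_field \<nu> x) / of_real (q x)"
    using False assms(1)[OF False] assms(2) by (rule radial_deriv_eq)
  moreover have "D x = (\<lambda>_. 0)"
    using assms(2) assms(3-5) by (rule has_derivative_eq_0_if_vanishes_on_open)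
  ultimately show ?thesis by simp
qed (simp add: radial_deriv_def)

lemma continuous_on_radial_deriv:
  fixes f :: "real^'n::finite \<Rightarrow> complex"
  assumes q: "continuous_on UNIV q" "\<And>x. x \<noteq> 0 \<Longrightarrow> q x > 0"
    and fD: "\<And>x. (f has_derivative D x) (at x)" and Dc: "\<And>v. continuous_on UNIV (\<lambda>x. D x v)"
    and K: "closed K" "0 \<notin> K" "\<And>x. x \<notin> K \<Longrightarrow> f x = 0"
  shows "continuous_on UNIV (radial_deriv \<nu> q f)"
proof -
  have Dl: "bounded_linear (D x)" for x
    using fD by (rule has_derivative_bounded_linear)
  have "q x \<noteq> 0" if "x \<in> - {0}" for x
    using q(2)[of x] that by auto
  then have "continuous_on (- {0}) (\<lambda>x. D x (euler_field \<nu> x) / of_real (q x))"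
    by (intro continuous_intros continuous_on_apply_bounded_linear[OF Dl Dc]
        continuous_on_id continuous_on_euler_field continuous_on_subset[OF q(1)]) auto
  then have "continuous_on (- {0}) (radial_deriv \<nu> q f)"
    by (rule continuous_on_eq) (simp add: radial_deriv_eq[OF _ q(2) fD])
  moreover have "radial_deriv \<nu> q f x = 0" if "x \<in> - K" for x
    using q(2) fD _ that by (rule radial_deriv_eq_0_if_vanishes_on_open) (use K in auto)
  then have "continuous_on (- K) (radial_deriv \<nu> q f)"
    by (intro continuous_on_eq[OF continuous_on_const]) auto
  ultimately have "continuous_on (- {0} \<union> - K) (radial_deriv \<nu> q f)"
    using K(1) by (intro continuous_on_open_Un) auto
  moreover have "- {0} \<union> - K = UNIV"
    using K(2) by auto
  ultimately show ?thesis by simp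
qed

lemma uncertainty_principle_radial:
  fixes f :: "real^'n::finite \<Rightarrow> complex"
  assumes q: "continuous_on UNIV q" "\<And>x. x \<noteq> 0 \<Longrightarrow> q x > 0"
    and fD: "\<And>x. (f has_derivative D x) (at x)" and Dc: "\<And>v. continuous_on UNIV (\<lambda>x. D x v)"
    and K: "compact K" "0 \<notin> K" and supp: "\<And>x. x \<notin> K \<Longrightarrow> f x = 0"
  shows "(\<Sum>i\<in>UNIV. \<nu> i) * (L2norm f)\<^sup>2
           \<le> 2 * (L2norm (radial_deriv \<nu> q f) * L2norm (\<lambda>x. of_real (q x) * f x))"
proof -
  define Rf where "Rf = radial_deriv \<nu> q f"
  define qf where "qf = (\<lambda>x. complex_of_real (q x) * f x)"
  have Rf_supp: "Rf x = 0" if "x \<notin> K" for x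
    unfolding Rf_def
    by (rule radial_deriv_eq_0_if_vanishes_on_open[OF q(2) fD, where U="- K"])
       (use that supp compact_imp_closed[OF K(1)] in auto)
  have "continuous_on UNIV Rf"
    unfolding Rf_def using q fD Dc compact_imp_closed[OF K(1)] K(2) supp
    by (rule continuous_on_radial_deriv)
  moreover have "continuous_on UNIV qf"
    unfolding qf_def using q(1) has_derivative_continuous_on[OF fD] by (intro continuous_intros)
  ultimately have "\<bar>LINT x|lborel. qf x \<bullet> Rf x\<bar> \<le> L2norm qf * L2norm Rf"
    by (intro abs_integral_inner_le_L2norm integrable_continuous_compact_support[OF _ K(1)]
        continuous_intros) (simp_all add: qf_def supp Rf_supp)
  moreover have "(\<Sum>i\<in>UNIV. \<nu> i) * (L2norm f)\<^sup>2 = - 2 * (LINT x|lborel. qf x \<bullet> Rf x)"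
    using euler_identity_integral_norm_sq[OF fD Dc K(1) supp]
    by (simp add: L2norm_def qf_def Rf_def
        quasi_norm_mult_radial_deriv[OF q(2) fD, symmetric] inner_complex_def algebra_simps)
  ultimately show ?thesis
    unfolding qf_def Rf_def by (simp add: mult.commute)
qed

theorem proposition3p3:
  fixes \<nu> :: "'n::finite \<Rightarrow> real"
    and gmul :: "real^'n \<Rightarrow> real^'n \<Rightarrow> real^'n"
    and ginv :: "real^'n \<Rightarrow> real^'n"
    and q :: "real^'n \<Rightarrow> real"
    and f :: "real^'n \<Rightarrow> complex"
  assumes "homogeneous_group \<nu> gmul ginv"
    and "hom_dim \<nu> \<ge> 3"
    and "hom_quasi_norm \<nu> ginv q"
    and "smooth_fun f"
    and "compact (closure {x. f x \<noteq> 0})"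
    and "0 \<notin> closure {x. f x \<noteq> 0}"
  shows "(L2norm f)\<^sup>2 \<le> 2 / (hom_dim \<nu> - 2) * L2norm (radial_deriv \<nu> q f)
            * L2norm (\<lambda>x. complex_of_real (q x) * f x)"
proof -
  define K where "K = closure {x. f x \<noteq> 0}"
  define D where "D x = frechet_derivative f (at x)" for x
  let ?N = "L2norm (radial_deriv \<nu> q f) * L2norm (\<lambda>x. complex_of_real (q x) * f x)"
  have fD: "(f has_derivative D x) (at x)" and Dc: "continuous_on UNIV (\<lambda>x. D x v)" for x v
    unfolding D_def using assms(4) by (rule smooth_fun_imp_C1)+
  have q: "continuous_on UNIV q" "\<And>x. x \<noteq> 0 \<Longrightarrow> q x > 0"
    using assms(3) by (auto simp: hom_quasi_norm_def less_le)
  have K: "compact K" "0 \<notin> K"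
    using assms(5,6) by (simp_all add: K_def)
  have supp: "f x = 0" if "x \<notin> K" for x
    using that closure_subset[of "{x. f x \<noteq> 0}"] unfolding K_def by blast
  have "hom_dim \<nu> * (L2norm f)\<^sup>2 \<le> 2 * ?N"
    unfolding hom_dim_def using q fD Dc K supp by (rule uncertainty_principle_radial)
  with assms(2) have "(L2norm f)\<^sup>2 \<le> 2 * ?N / hom_dim \<nu>"
    by (simp add: pos_le_divide_eq mult.commute)
  also have "\<dots> \<le> 2 * ?N / (hom_dim \<nu> - 2)"
    using assms(2) by (intro divide_left_mono) (auto simp: L2norm_def)
  finally show ?thesis
    by (simp add: mult_ac)
qed

end
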